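(* Let $m\ge 2$, $n=n_1+\cdots+n_r$, and let $\mathcal{A},\mathcal{B}$ be real $m$-th order $n$-dimensional tensors such that $\mathcal{A}x^m\neq 0$ for every $x\in\mathcal{K}\setminus\{0\}$. Define $\lambda(x)=\mathcal{B}x^m/\mathcal{A}x^m$ and $F(x)=\lambda(x)\mathcal{A}x^{m-1}-\mathcal{B}x^{m-1}$ for $x\in\mathcal{K}\setminus\{0\}$. If $\bar x\in\mathcal{K}_0$ satisfies $$F(\bar x)^\top(z-\bar x)\ge 0\quad\text{for all } z\in\mathcal{K}_0,$$ then $(\bar x,\lambda(\bar x))$ is a solution of the second-order cone tensor eigenvalue complementarity problem, i.e. $\bar x\neq 0$, $\bar x\in\mathcal{K}$, $\bar w:=(\lambda(\bar x)\mathcal{A}-\mathcal{B})\bar x^{m-1}\in\mathcal{K}$ and $\langle \bar x,\bar w\rangle=0$.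
   Context: A real $m$-th order $n$-dimensional tensor is an array $\mathcal{A}=(a_{i_1\ldots i_m})$, $a_{i_1\ldots i_m}\in\mathbb{R}$, $1\le i_1,\ldots,i_m\le n$. For $x\in\mathbb{R}^n$, $\mathcal{A}x^{m-1}\in\mathbb{R}^n$ has $i$-th component $\sum_{i_2,\ldots,i_m=1}^n a_{ii_2\ldots i_m}x_{i_2}\cdots x_{i_m}$, and $\mathcal{A}x^m=\sum_{i_1,\ldots,i_m=1}^n a_{i_1\ldots i_m}x_{i_1}\cdots x_{i_m}$. Vectors $x\in\mathbb{R}^n$ are written $x=(x^1,\ldots,x^r)\in\mathbb{R}^{n_1}\times\cdots\times\mathbb{R}^{n_r}$ with $x^i=(x^i_\circ,x^i_\bullet)\in\mathbb{R}\times\mathbb{R}^{n_i-1}$. The second-order cone is $\mathcal{K}=\mathcal{K}^{n_1}\times\cdots\times\mathcal{K}^{n_r}$ with $\mathcal{K}^{n_i}=\{x^i\in\mathbb{R}^{n_i}: x^i_\circ\ge\|x^i_\bullet\|\}$ (Euclidean norm); $\mathcal{K}$ is self-dual. Let $e=(e^1,\ldots,e^r)$ with $e^i=(1,0,\ldots,0)^\top\in\mathbb{R}^{n_i}$ and $\mathcal{K}_0=\{x\in\mathcal{K}: e^\top x=1\}$. *)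

theory Defs
  imports Complex_Main
begin

text \<open>Vectors of R^n (n = n_1 + ... + n_r) are functions nat => real vanishing at
indices >= n. The block structure is given by the list ns = [n_1,...,n_r].
Block i (0-based) occupies indices blk_start ns i, ..., blk_start ns i + ns!i - 1,
its first index being the component x^i_o.\<close>

definition blk_start :: "nat list \<Rightarrow> nat \<Rightarrow> nat" where
  "blk_start ns i = sum_list (take i ns)"

definition soc :: "nat list \<Rightarrow> (nat \<Rightarrow> real) set" where
  "soc ns = {x. (\<forall>j\<ge>sum_list ns. x j = 0) \<and>
     (\<forall>i<length ns. sqrt (\<Sum>j\<in>{blk_start ns i + 1..<blk_start ns i + ns ! i}. (x j)^2)
                       \<le> x (blk_start ns i))}"

definition soc0 :: "nat list \<Rightarrow> (nat \<Rightarrow> real) set" where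
  "soc0 ns = {x \<in> soc ns. (\<Sum>i<length ns. x (blk_start ns i)) = 1}"

definition idx :: "nat \<Rightarrow> nat \<Rightarrow> nat list set" where
  "idx k n = {is. length is = k \<and> set is \<subseteq> {..<n}}"

text \<open>A tensor of order m and dimension n is a function on index lists of length m.
A x^m :\<close>
definition tpow :: "nat \<Rightarrow> nat \<Rightarrow> (nat list \<Rightarrow> real) \<Rightarrow> (nat \<Rightarrow> real) \<Rightarrow> real" where
  "tpow n m A x = (\<Sum>is\<in>idx m n. A is * prod_list (map x is))"

definition tvec :: "nat \<Rightarrow> nat \<Rightarrow> (nat list \<Rightarrow> real) \<Rightarrow> (nat \<Rightarrow> real) \<Rightarrow> (nat \<Rightarrow> real)" where
  "tvec n m A x = (\<lambda>i. if i < n then (\<Sum>is\<in>idx (m - 1) n. A (i # is) * prod_list (map x is)) else 0)"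

definition vinner :: "nat \<Rightarrow> (nat \<Rightarrow> real) \<Rightarrow> (nat \<Rightarrow> real) \<Rightarrow> real" where
  "vinner n x y = (\<Sum>j<n. x j * y j)"

definition lam :: "nat \<Rightarrow> nat \<Rightarrow> (nat list \<Rightarrow> real) \<Rightarrow> (nat list \<Rightarrow> real) \<Rightarrow> (nat \<Rightarrow> real) \<Rightarrow> real" where
  "lam n m A B x = tpow n m B x / tpow n m A x"

definition Fmap :: "nat \<Rightarrow> nat \<Rightarrow> (nat list \<Rightarrow> real) \<Rightarrow> (nat list \<Rightarrow> real) \<Rightarrow> (nat \<Rightarrow> real) \<Rightarrow> (nat \<Rightarrow> real)" where
  "Fmap n m A B x = (\<lambda>i. lam n m A B x * tvec n m A x i - tvec n m B x i)"

end

theory Submission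
  imports Defs
begin

text \<open>By Euler's identity for homogeneous forms, \<open>\<langle>x, \<A>x\<^sup>m\<^sup>-\<^sup>1\<rangle> = \<A>x\<^sup>m\<close>, so the choice of
  \<open>\<lambda>(x)\<close> makes \<open>F(x)\<close> orthogonal to \<open>x\<close>. The variational inequality then says
  \<open>\<langle>F(x\<^sub>0), z\<rangle> \<ge> 0\<close> for all \<open>z \<in> \<K>\<^sub>0\<close>, and \<open>\<K>\<^sub>0\<close> spans the self-dual cone \<open>\<K>\<close>: testing against
  \<open>z = e\<^sup>i - (0, w\<^sup>i\<^sub>\<bullet>/\<parallel>w\<^sup>i\<^sub>\<bullet>\<parallel>)\<close> in block \<open>i\<close> yields \<open>w\<^sup>i\<^sub>\<circ> \<ge> \<parallel>w\<^sup>i\<^sub>\<bullet>\<parallel>\<close>, i.e. \<open>F(x\<^sub>0) \<in> \<K>\<close>.\<close>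

lemma blk_start_mono:
  assumes "i \<le> i'" shows "blk_start ns i \<le> blk_start ns i'"
proof -
  have "take i' ns = take i ns @ drop i (take i' ns)"
    using assms by (metis append_take_drop_id min.absorb1 take_take)
  then show ?thesis unfolding blk_start_def by (metis le_add1 sum_list_append)
qed

lemma blk_start_Suc:
  assumes "i < length ns" shows "blk_start ns (Suc i) = blk_start ns i + ns ! i"
  using assms unfolding blk_start_def by (simp add: take_Suc_conv_app_nth)

lemma blk_end_le_blk_start:
  assumes "i < i'" "i < length ns" shows "blk_start ns i + ns ! i \<le> blk_start ns i'"
  using blk_start_mono[of "Suc i" i' ns] blk_start_Suc[OF assms(2)] assms by simp

lemma blk_end_le_sum_list:
  assumes "i < length ns" shows "blk_start ns i + ns ! i \<le> sum_list ns"
proof -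
  have "blk_start ns (Suc i) \<le> blk_start ns (length ns)"
    using assms blk_start_mono by simp
  moreover have "blk_start ns (length ns) = sum_list ns"
    unfolding blk_start_def by simp
  ultimately show ?thesis using blk_start_Suc[OF assms] by simp
qed

lemma blocks_disjoint:
  assumes "i < length ns" "i' < length ns" "i \<noteq> i'"
  shows "blk_start ns i' + ns ! i' \<le> blk_start ns i \<or> blk_start ns i + ns ! i \<le> blk_start ns i'"
  using assms blk_end_le_blk_start[of i i' ns] blk_end_le_blk_start[of i' i ns]
  by (cases "i < i'") auto

lemma idx_Suc: "idx (Suc k) n = (\<lambda>(j, is). j # is) ` ({..<n} \<times> idx k n)"
proof (rule set_eqI)
  fix xs
  show "xs \<in> idx (Suc k) n \<longleftrightarrow> xs \<in> (\<lambda>(j, is). j # is) ` ({..<n} \<times> idx k n)"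
  proof
    assume "xs \<in> idx (Suc k) n"
    then obtain j ys where "xs = j # ys" "length ys = k" "j < n" "set ys \<subseteq> {..<n}"
      unfolding idx_def by (cases xs) auto
    then show "xs \<in> (\<lambda>(j, is). j # is) ` ({..<n} \<times> idx k n)"
      unfolding idx_def by (auto intro!: image_eqI[where x="(j, ys)"])
  qed (auto simp: idx_def)
qed

lemma vinner_tvec_eq_tpow:
  assumes "m \<ge> 1"
  shows "vinner n x (tvec n m A x) = tpow n m A x"
proof -
  obtain k where m: "m = Suc k" using assms by (cases m) auto
  have inj: "inj_on (\<lambda>(j, is). j # is) ({..<n} \<times> idx k n)"
    by (auto simp: inj_on_def)
  have "tpow n m A x = (\<Sum>(j, is)\<in>{..<n} \<times> idx k n. A (j # is) * prod_list (map x (j # is)))"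
    unfolding tpow_def m idx_Suc by (subst sum.reindex[OF inj]) (simp add: case_prod_beta)
  also have "\<dots> = (\<Sum>j<n. \<Sum>is\<in>idx k n. A (j # is) * (x j * prod_list (map x is)))"
    unfolding sum.cartesian_product by (simp add: case_prod_beta algebra_simps)
  also have "\<dots> = vinner n x (tvec n m A x)"
    unfolding vinner_def tvec_def m
    by (auto simp: sum_distrib_left algebra_simps intro!: sum.cong)
  finally show ?thesis by simp
qed

lemma vinner_Fmap_self:
  assumes "m \<ge> 1" "tpow n m A x \<noteq> 0"
  shows "vinner n x (Fmap n m A B x) = 0"
proof -
  have "vinner n x (Fmap n m A B x)
          = lam n m A B x * vinner n x (tvec n m A x) - vinner n x (tvec n m B x)"
    unfolding Fmap_def vinner_def
    by (simp add: sum_subtractf sum_distrib_left algebra_simps)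
  then show ?thesis
    using assms by (simp add: vinner_tvec_eq_tpow lam_def)
qed

definition blk_tail :: "nat list \<Rightarrow> nat \<Rightarrow> nat set" where
  "blk_tail ns i = {blk_start ns i + 1..<blk_start ns i + ns ! i}"

definition tail_norm :: "nat list \<Rightarrow> nat \<Rightarrow> (nat \<Rightarrow> real) \<Rightarrow> real" where
  "tail_norm ns i w = sqrt (\<Sum>j\<in>blk_tail ns i. (w j)\<^sup>2)"

definition soc_test :: "nat list \<Rightarrow> nat \<Rightarrow> (nat \<Rightarrow> real) \<Rightarrow> nat \<Rightarrow> real" where
  "soc_test ns i w = (\<lambda>j. if j = blk_start ns i then 1
     else if j \<in> blk_tail ns i \<and> tail_norm ns i w \<noteq> 0 then - w j / tail_norm ns i w
     else 0)"

lemma tail_norm_squared: "(tail_norm ns i w)\<^sup>2 = (\<Sum>j\<in>blk_tail ns i. (w j)\<^sup>2)"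
  unfolding tail_norm_def by (simp add: sum_nonneg)

lemma soc_test_outside_block:
  assumes "0 < ns ! i" "j < blk_start ns i \<or> blk_start ns i + ns ! i \<le> j"
  shows "soc_test ns i w j = 0"
  using assms unfolding soc_test_def blk_tail_def by auto

lemma soc_test_tail_norm: "(\<Sum>j\<in>blk_tail ns i. (soc_test ns i w j)\<^sup>2) \<le> 1"
proof (cases "tail_norm ns i w = 0")
  case False
  have "(\<Sum>j\<in>blk_tail ns i. (soc_test ns i w j)\<^sup>2)
          = (\<Sum>j\<in>blk_tail ns i. (w j)\<^sup>2) / (tail_norm ns i w)\<^sup>2"
    unfolding sum_divide_distrib
    by (rule sum.cong) (auto simp: soc_test_def blk_tail_def False power_divide)
  then show ?thesis using False by (simp add: tail_norm_squared)
qed (simp add: soc_test_def blk_tail_def)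

lemma soc_test_in_soc0:
  assumes blocks: "\<forall>k\<in>set ns. k \<ge> 1" and i: "i < length ns"
  shows "soc_test ns i w \<in> soc0 ns"
proof -
  let ?z = "soc_test ns i w"
  have pos: "0 < ns ! i'" if "i' < length ns" for i'
    using blocks that nth_mem by fastforce
  have other_block: "?z (blk_start ns i') = 0 \<and> (\<Sum>j\<in>blk_tail ns i'. (?z j)\<^sup>2) = 0"
    if i': "i' < length ns" "i' \<noteq> i" for i'
    using blocks_disjoint[OF i i'(1) i'(2)[symmetric]] pos[OF i] pos[OF i'(1)]
    by (auto simp: blk_tail_def intro!: sum.neutral soc_test_outside_block)
  have "?z \<in> soc ns"
    unfolding soc_def
  proof (intro CollectI conjI allI impI)
    fix j assume "sum_list ns \<le> j"
    then show "?z j = 0"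
      using blk_end_le_sum_list[OF i] pos[OF i] by (intro soc_test_outside_block) auto
  next
    fix i' assume i': "i' < length ns"
    show "sqrt (\<Sum>j\<in>{blk_start ns i' + 1..<blk_start ns i' + ns ! i'}. (?z j)\<^sup>2)
            \<le> ?z (blk_start ns i')"
      using other_block[OF i'] soc_test_tail_norm[of ns i w]
      by (cases "i' = i") (auto simp: blk_tail_def soc_test_def)
  qed
  moreover have "(\<Sum>i'<length ns. ?z (blk_start ns i')) = 1"
    using i other_block
    by (subst sum.remove[of _ i]) (auto simp: soc_test_def intro!: sum.neutral)
  ultimately show ?thesis unfolding soc0_def by simp
qed

lemma vinner_soc_test:
  assumes i: "i < length ns" and pos: "0 < ns ! i"
  shows "vinner (sum_list ns) w (soc_test ns i w) = w (blk_start ns i) - tail_norm ns i w"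
proof -
  let ?s = "blk_start ns i" and ?N = "tail_norm ns i w"
  have "vinner (sum_list ns) w (soc_test ns i w)
          = (\<Sum>j\<in>{?s..<?s + ns ! i}. w j * soc_test ns i w j)"
    unfolding vinner_def
    using blk_end_le_sum_list[OF i] soc_test_outside_block[OF pos]
    by (intro sum.mono_neutral_right) auto
  also have "{?s..<?s + ns ! i} = insert ?s (blk_tail ns i)"
    using pos by (auto simp: blk_tail_def)
  also have "(\<Sum>j\<in>insert ?s (blk_tail ns i). w j * soc_test ns i w j)
               = w ?s + (\<Sum>j\<in>blk_tail ns i. w j * soc_test ns i w j)"
    by (simp add: blk_tail_def soc_test_def)
  also have "(\<Sum>j\<in>blk_tail ns i. w j * soc_test ns i w j) = - ?N"
  proof (cases "?N = 0")
    case False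
    have "(\<Sum>j\<in>blk_tail ns i. w j * soc_test ns i w j) = - (\<Sum>j\<in>blk_tail ns i. (w j)\<^sup>2) / ?N"
      unfolding sum_divide_distrib sum_negf[symmetric]
      by (rule sum.cong) (auto simp: soc_test_def blk_tail_def False power2_eq_square)
    also have "\<dots> = - ?N"
      using False unfolding tail_norm_squared[symmetric] by (simp add: power2_eq_square)
    finally show ?thesis .
  qed (simp add: soc_test_def blk_tail_def)
  finally show ?thesis by simp
qed

lemma in_soc_if_nonneg_on_soc0:
  assumes blocks: "\<forall>k\<in>set ns. k \<ge> 1"
    and support: "\<forall>j\<ge>sum_list ns. w j = 0"
    and nonneg: "\<forall>z\<in>soc0 ns. vinner (sum_list ns) w z \<ge> 0"
  shows "w \<in> soc ns"
  unfolding soc_def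
proof (intro CollectI conjI allI impI)
  fix i assume i: "i < length ns"
  then have "0 < ns ! i" using blocks nth_mem by fastforce
  then show "sqrt (\<Sum>j\<in>{blk_start ns i + 1..<blk_start ns i + ns ! i}. (w j)\<^sup>2) \<le> w (blk_start ns i)"
    using nonneg soc_test_in_soc0[OF blocks i, of w] vinner_soc_test[OF i]
    by (fastforce simp: tail_norm_def blk_tail_def)
qed (use support in auto)

theorem theorem1:
  fixes ns :: "nat list" and m :: nat and A B :: "nat list \<Rightarrow> real" and xb :: "nat \<Rightarrow> real"
  defines "n \<equiv> sum_list ns"
  assumes m2: "m \<ge> 2"
    and blocks: "\<forall>k\<in>set ns. k \<ge> 1"
    and Anz: "\<forall>x\<in>soc ns - {\<lambda>_. 0}. tpow n m A x \<noteq> 0"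
    and xb0: "xb \<in> soc0 ns"
    and VI: "\<forall>z\<in>soc0 ns. vinner n (Fmap n m A B xb) (\<lambda>j. z j - xb j) \<ge> 0"
  shows "xb \<noteq> (\<lambda>_. 0) \<and> xb \<in> soc ns \<and>
         (\<lambda>i. lam n m A B xb * tvec n m A xb i - tvec n m B xb i) \<in> soc ns \<and>
         vinner n xb (\<lambda>i. lam n m A B xb * tvec n m A xb i - tvec n m B xb i) = 0"
proof -
  let ?F = "Fmap n m A B xb"
  have xb_soc: "xb \<in> soc ns" and xb_nz: "xb \<noteq> (\<lambda>_. 0)"
    using xb0 unfolding soc0_def by auto
  have compl: "vinner n xb ?F = 0"
    using Anz xb_soc xb_nz m2 by (intro vinner_Fmap_self) auto
  have "vinner n ?F z \<ge> 0" if "z \<in> soc0 ns" for z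
  proof -
    have "vinner n ?F (\<lambda>j. z j - xb j) = vinner n ?F z - vinner n xb ?F"
      unfolding vinner_def by (simp add: sum_subtractf algebra_simps)
    then show ?thesis using VI that compl by auto
  qed
  moreover have "\<forall>j\<ge>n. ?F j = 0"
    unfolding Fmap_def tvec_def by simp
  ultimately have "?F \<in> soc ns"
    using blocks unfolding n_def by (intro in_soc_if_nonneg_on_soc0) auto
  then show ?thesis
    using xb_nz xb_soc compl unfolding Fmap_def by simp
qed

end
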